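(* Consider a finite-horizon POMDP $\mathcal{M}$ in which, alongside the interaction, beliefs $\bm{b}_1,\dots,\bm{b}_T\in\Delta(\mathcal{S})$ are computed, with $\bm{b}_t$ a deterministic function (not depending on the policy parameters) of the history $(o_1,a_1,\dots,a_{t-1},o_t)$ (e.g. exact Bayesian beliefs or beliefs from an approximate belief oracle). Define the Maximum Believed Entropy objective $$\tilde J(\pi)=\mathbb{E}_{\tau_{\mathcal{B}}\sim p^\pi}\,\mathbb{E}_{\tau_{\tilde{\mathcal{S}}}\sim p(\cdot\mid\tau_{\mathcal{B}})}\big[H(d(\tau_{\tilde{\mathcal{S}}}))\big],$$ where $\tau_{\mathcal{B}}=(\bm{b}_1,\dots,\bm{b}_T)$ and, given $\tau_{\mathcal{B}}$, the believed trajectory $\tau_{\tilde{\mathcal{S}}}=(\tilde s_1,\dots,\tilde s_T)$ has probability $p(\tau_{\tilde{\mathcal{S}}}\mid\tau_{\mathcal{B}})=\prod_{t=1}^T\bm{b}_t(\tilde s_t)$. (i) If $\{\pi_\theta\}_{\theta\in\Theta}$ is a family of policies with information set $\mathcal{I}$ such that $\theta\mapsto\pi_\theta(a\mid i)$ is differentiable and strictly positive for all $a,i$, then $$\nabla_\theta\tilde J(\pi_\theta)=\mathbb{E}_{\tau\sim p^{\pi_\theta}}\,\mathbb{E}_{\tau_{\tilde{\mathcal{S}}}\sim p(\cdot\mid\tau_{\mathcal{B}})}\Big[\Big(\sum_{t=1}^{T-1}\nabla_\theta\log\pi_\theta(a_t\mid i_t)\Big)H(d(\tau_{\tilde{\mathcal{S}}}))\Big].$$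 (ii) For two policies $\pi_1,\pi_2$ with information set $\mathcal{I}$, let $\mathcal{T}_{\mathcal{B}}(\pi_1,\pi_2)$ be the set of belief trajectories with positive probability under $p^{\pi_1}$ or $p^{\pi_2}$, let $\tau^\star_{\mathcal{B}}\in\arg\max_{\tau_{\mathcal{B}}\in\mathcal{T}_{\mathcal{B}}(\pi_1,\pi_2)}\mathbb{E}_{\tau_{\tilde{\mathcal{S}}}\sim p(\cdot\mid\tau_{\mathcal{B}})}H(d(\tau_{\tilde{\mathcal{S}}}))$ and $\bar H(\tau^\star_{\mathcal{B}})=\mathbb{E}_{\tau_{\tilde{\mathcal{S}}}\sim p(\cdot\mid\tau^\star_{\mathcal{B}})}H(d(\tau_{\tilde{\mathcal{S}}}))$. Then $$|\tilde J(\pi_1)-\tilde J(\pi_2)|\le T\,\bar H(\tau^\star_{\mathcal{B}})\,d^{TV}(\pi_1,\pi_2),$$ where $d^{TV}(\pi_1,\pi_2):=\sup_{i\in\mathcal{I}}d^{TV}(\pi_1(\cdot\mid i),\pi_2(\cdot\mid i))$.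
   Context: A finite-horizon POMDP $\mathcal{M}=(\mathcal{S},\mathcal{A},\mathcal{O},\mathbb{P},\mathbb{O},T,\mu)$ has finite state, action and observation sets, transition kernel $\mathbb{P}$, observation kernel $\mathbb{O}$, horizon $T$, initial distribution $\mu$. Under a policy $\pi:\mathcal{I}\to\Delta(\mathcal{A})$: $s_1\sim\mu$, $o_t\sim\mathbb{O}(\cdot\mid s_t)$, and for $t<T$, $a_t\sim\pi(\cdot\mid i_t)$, $s_{t+1}\sim\mathbb{P}(\cdot\mid s_t,a_t)$, with $i_t$ a deterministic function of $(o_1,a_1,\dots,a_{t-1},o_t)$; $p^\pi$ is the law of the joint trajectory $\tau$ (states, actions, observations, beliefs). For a sequence $x=(x_1,\dots,x_T)$ over a finite set, $d(x)$ is its empirical distribution $d_y(x)=\frac1T\sum_t\mathbf{1}\{x_t=y\}$, $H$ is Shannon entropy (natural log), and $d^{TV}(p,q)=\frac12\sum_x|p(x)-q(x)|$. *)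

theory Defs
  imports "HOL-Analysis.Analysis"
begin

text \<open>Lists are 0-indexed: a trajectory is
  (ss, os, acts) with states ss = [s_1..s_T], observations os = [o_1..o_T] and
  actions acts = [a_1..a_(T-1)].  The kernel conventions are:
  mu s = initial probability, P s a s' = P(s' | s,a), Ob s o = O(o | s).
  A history at (0-based) step t is (o_1..o_(t+1), a_1..a_t).\<close>

type_synonym ('o,'a) hist = "'o list \<times> 'a list"

definition is_dist :: "('x \<Rightarrow> real) \<Rightarrow> bool" where
  "is_dist p \<longleftrightarrow> (\<forall>x. 0 \<le> p x) \<and> sum p UNIV = 1"

definition hist_at :: "'o list \<Rightarrow> 'a list \<Rightarrow> nat \<Rightarrow> ('o,'a) hist" where
  "hist_at os acts t = (take (Suc t) os, take t acts)"

definition trajs :: "nat \<Rightarrow> ('s list \<times> 'o list \<times> 'a list) set" where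
  "trajs T = {(ss, os, acts). length ss = T \<and> length os = T \<and> length acts = T - 1}"

definition traj_prob ::
  "('s \<Rightarrow> real) \<Rightarrow> ('s \<Rightarrow> 'a \<Rightarrow> 's \<Rightarrow> real) \<Rightarrow> ('s \<Rightarrow> 'o \<Rightarrow> real) \<Rightarrow> nat \<Rightarrow>
   (('o,'a) hist \<Rightarrow> 'i) \<Rightarrow> ('i \<Rightarrow> 'a \<Rightarrow> real) \<Rightarrow> 's list \<times> 'o list \<times> 'a list \<Rightarrow> real" where
  "traj_prob mu P Ob T info pol \<tau> =
    (case \<tau> of (ss, os, acts) \<Rightarrow>
      if \<tau> \<in> trajs T then
        mu (ss ! 0) * (\<Prod>t<T. Ob (ss ! t) (os ! t)) *
        (\<Prod>t<T - 1. pol (info (hist_at os acts t)) (acts ! t) * P (ss ! t) (acts ! t) (ss ! Suc t))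
      else 0)"

definition belief_traj ::
  "(('o,'a) hist \<Rightarrow> 's \<Rightarrow> real) \<Rightarrow> nat \<Rightarrow> 's list \<times> 'o list \<times> 'a list \<Rightarrow> ('s \<Rightarrow> real) list" where
  "belief_traj bel T \<tau> = (case \<tau> of (ss, os, acts) \<Rightarrow> map (\<lambda>t. bel (hist_at os acts t)) [0..<T])"

definition believed_prob :: "('s \<Rightarrow> real) list \<Rightarrow> 's list \<Rightarrow> real" where
  "believed_prob bs xs = (\<Prod>t<length bs. (bs ! t) (xs ! t))"

definition emp_dist :: "'s list \<Rightarrow> 's \<Rightarrow> real" where
  "emp_dist xs y = real (length (filter (\<lambda>x. x = y) xs)) / real (length xs)"

definition entropy :: "('s \<Rightarrow> real) \<Rightarrow> real" where
  "entropy p = - (\<Sum>y\<in>UNIV. if p y = 0 then 0 else p y * ln (p y))"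

definition believed_entropy :: "('s \<Rightarrow> real) list \<Rightarrow> real" where
  "believed_entropy bs =
     (\<Sum>xs\<in>{xs. length xs = length bs}. believed_prob bs xs * entropy (emp_dist xs))"

definition MBE_obj ::
  "('s \<Rightarrow> real) \<Rightarrow> ('s \<Rightarrow> 'a \<Rightarrow> 's \<Rightarrow> real) \<Rightarrow> ('s \<Rightarrow> 'o \<Rightarrow> real) \<Rightarrow> nat \<Rightarrow>
   (('o,'a) hist \<Rightarrow> 'i) \<Rightarrow> (('o,'a) hist \<Rightarrow> 's \<Rightarrow> real) \<Rightarrow> ('i \<Rightarrow> 'a \<Rightarrow> real) \<Rightarrow> real" where
  "MBE_obj mu P Ob T info bel pol =
     (\<Sum>\<tau>\<in>trajs T. traj_prob mu P Ob T info pol \<tau> *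
        (\<Sum>xs\<in>{xs. length xs = T}.
           believed_prob (belief_traj bel T \<tau>) xs * entropy (emp_dist xs)))"

text \<open>Score term sum_{t=1}^{T-1} grad log pi_theta(a_t | i_t), applied to a direction h,
  written as (D pi_theta(a_t|i_t) h) / pi_theta(a_t|i_t).\<close>
definition score ::
  "nat \<Rightarrow> (('o,'a) hist \<Rightarrow> 'i) \<Rightarrow> ('i \<Rightarrow> 'a \<Rightarrow> real) \<Rightarrow> ('i \<Rightarrow> 'a \<Rightarrow> 'p \<Rightarrow> real) \<Rightarrow>
   's list \<times> 'o list \<times> 'a list \<Rightarrow> 'p \<Rightarrow> real" where
  "score T info pol Dpol \<tau> h =
     (case \<tau> of (ss, os, acts) \<Rightarrow>
       \<Sum>t<T - 1. Dpol (info (hist_at os acts t)) (acts ! t) h / pol (info (hist_at os acts t)) (acts ! t))"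

definition belief_traj_prob ::
  "('s \<Rightarrow> real) \<Rightarrow> ('s \<Rightarrow> 'a \<Rightarrow> 's \<Rightarrow> real) \<Rightarrow> ('s \<Rightarrow> 'o \<Rightarrow> real) \<Rightarrow> nat \<Rightarrow>
   (('o,'a) hist \<Rightarrow> 'i) \<Rightarrow> (('o,'a) hist \<Rightarrow> 's \<Rightarrow> real) \<Rightarrow> ('i \<Rightarrow> 'a \<Rightarrow> real) \<Rightarrow>
   ('s \<Rightarrow> real) list \<Rightarrow> real" where
  "belief_traj_prob mu P Ob T info bel pol B =
     (\<Sum>\<tau>\<in>{\<tau>\<in>trajs T. belief_traj bel T \<tau> = B}. traj_prob mu P Ob T info pol \<tau>)"

definition pos_belief_trajs where
  "pos_belief_trajs mu P Ob T info bel pol1 pol2 =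
     {B. belief_traj_prob mu P Ob T info bel pol1 B > 0 \<or> belief_traj_prob mu P Ob T info bel pol2 B > 0}"

definition tv_dist :: "('x \<Rightarrow> real) \<Rightarrow> ('x \<Rightarrow> real) \<Rightarrow> real" where
  "tv_dist p q = (1/2) * (\<Sum>x\<in>UNIV. \<bar>p x - q x\<bar>)"

definition policy_tv :: "('i \<Rightarrow> 'a \<Rightarrow> real) \<Rightarrow> ('i \<Rightarrow> 'a \<Rightarrow> real) \<Rightarrow> real" where
  "policy_tv pol1 pol2 = (SUP i. tv_dist (pol1 i) (pol2 i))"

end

theory Submission
  imports Defs
begin

text \<open>
  Part (i) is the likelihood-ratio trick: the objective is a finite sum of trajectory
  probabilities times a quantity that does not depend on the policy, and the derivative of a
  trajectory probability is that probability times the sum of the logarithmic derivatives of its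
  policy factors.

  Part (ii) is a simulation argument.  On every trajectory that is possible under one of the two
  policies, the expected believed entropy is at most \<open>M\<close>, that of the maximiser \<open>Bstar\<close>.  Writing both
  objectives by backward induction as expectations of the conditional future payoff, each of
  the \<open>T - 1\<close> action steps changes the conditional expectation of a \<open>[0, M]\<close>-valued payoff by at
  most \<open>\<delta> M\<close>, where \<open>\<delta>\<close> is the policy total-variation distance; this gives \<open>(T - 1) \<delta> M \<le> T \<delta> M\<close>.
\<close>

lemma finite_length_lists: "finite {xs :: 'x::finite list. length xs = n}"
  using finite_lists_length_eq[of "UNIV :: 'x set" n] by simp

lemma trajs_eq_product:
  "trajs T = {ss. length ss = T} \<times> {os. length os = T} \<times> {acts. length acts = T - 1}"
  unfolding trajs_def by auto

lemma finite_trajs: "finite (trajs T :: ('s::finite list \<times> 'o::finite list \<times> 'a::finite list) set)"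
  unfolding trajs_eq_product by (intro finite_cartesian_product finite_length_lists)

definition traj_snoc ::
  "'s list \<times> 'o list \<times> 'a list \<Rightarrow> 'a \<times> 's \<times> 'o \<Rightarrow> 's list \<times> 'o list \<times> 'a list" where
  "traj_snoc \<tau> x = (case \<tau> of (ss, os, acts) \<Rightarrow> case x of (a, s', o') \<Rightarrow> (ss @ [s'], os @ [o'], acts @ [a]))"

lemma inj_traj_snoc: "inj_on (\<lambda>(\<tau>, x). traj_snoc \<tau> x) X"
  by (auto simp: inj_on_def traj_snoc_def split: prod.splits)

lemma trajs_Suc:
  assumes "1 \<le> m"
  shows "trajs (Suc m) = (\<lambda>(\<tau>, x). traj_snoc \<tau> x) ` (trajs m \<times> UNIV)"
proof
  show "(\<lambda>(\<tau>, x). traj_snoc \<tau> x) ` (trajs m \<times> UNIV) \<subseteq> trajs (Suc m)"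
    using assms by (auto simp: trajs_def traj_snoc_def)
next
  show "trajs (Suc m) \<subseteq> (\<lambda>(\<tau>, x). traj_snoc \<tau> x) ` (trajs m \<times> UNIV)"
  proof
    fix \<tau> assume \<tau>: "\<tau> \<in> trajs (Suc m)"
    obtain ss os acts where \<tau>_eq: "\<tau> = (ss, os, acts)" by (cases \<tau>) auto
    have len: "length ss = Suc m" "length os = Suc m" "length acts = m"
      using \<tau> \<tau>_eq by (auto simp: trajs_def)
    then have "ss \<noteq> []" "os \<noteq> []" "acts \<noteq> []" using assms by auto
    then have "\<tau> = traj_snoc (butlast ss, butlast os, butlast acts) (last acts, last ss, last os)"
      using \<tau>_eq by (simp add: traj_snoc_def)
    moreover have "(butlast ss, butlast os, butlast acts) \<in> trajs m"
      using len by (simp add: trajs_def)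
    ultimately show "\<tau> \<in> (\<lambda>(\<tau>, x). traj_snoc \<tau> x) ` (trajs m \<times> UNIV)" by force
  qed
qed

lemma sum_trajs_Suc:
  fixes g :: "'s::finite list \<times> 'o::finite list \<times> 'a::finite list \<Rightarrow> real"
  assumes "1 \<le> m"
  shows "(\<Sum>\<tau>\<in>trajs (Suc m). g \<tau>) =
    (\<Sum>\<tau>\<in>trajs m. \<Sum>a\<in>UNIV. \<Sum>s'\<in>UNIV. \<Sum>o'\<in>UNIV. g (traj_snoc \<tau> (a, s', o')))"
proof -
  have "(\<Sum>\<tau>\<in>trajs (Suc m). g \<tau>) = (\<Sum>p\<in>trajs m \<times> UNIV. g (traj_snoc (fst p) (snd p)))"
    unfolding trajs_Suc[OF assms] by (subst sum.reindex[OF inj_traj_snoc]) (simp add: case_prod_beta)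
  also have "\<dots> = (\<Sum>\<tau>\<in>trajs m. \<Sum>a\<in>UNIV. \<Sum>s'\<in>UNIV. \<Sum>o'\<in>UNIV. g (traj_snoc \<tau> (a, s', o')))"
    by (simp add: UNIV_Times_UNIV[symmetric] sum.cartesian_product case_prod_beta
        del: UNIV_Times_UNIV)
  finally show ?thesis .
qed

lemma traj_prob_snoc:
  assumes \<tau>: "(ss, os, acts) \<in> trajs m" and m: "1 \<le> m"
  shows "traj_prob mu P Ob (Suc m) info pol (traj_snoc (ss, os, acts) (a, s', o')) =
     traj_prob mu P Ob m info pol (ss, os, acts) * (pol (info (os, acts)) a * (P (last ss) a s' * Ob s' o'))"
proof -
  obtain k where k: "m = Suc k" using m by (cases m) auto
  have len: "length ss = Suc k" "length os = Suc k" "length acts = k"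
    using \<tau> k by (auto simp: trajs_def)
  have snoc_in: "(ss @ [s'], os @ [o'], acts @ [a]) \<in> trajs (Suc m)"
    using len k by (simp add: trajs_def)
  have obs: "(\<Prod>t<Suc m. Ob ((ss @ [s']) ! t) ((os @ [o']) ! t)) = (\<Prod>t<m. Ob (ss ! t) (os ! t)) * Ob s' o'"
    using len k by (simp add: nth_append)
  have old_steps: "(\<Prod>t<k. pol (info (hist_at (os @ [o']) (acts @ [a]) t)) ((acts @ [a]) ! t) *
          P ((ss @ [s']) ! t) ((acts @ [a]) ! t) ((ss @ [s']) ! Suc t))
     = (\<Prod>t<k. pol (info (hist_at os acts t)) (acts ! t) * P (ss ! t) (acts ! t) (ss ! Suc t))"
    using len by (intro prod.cong) (auto simp: nth_append hist_at_def)
  have "ss \<noteq> []" using len by auto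
  then have "hist_at (os @ [o']) (acts @ [a]) k = (os, acts)" "(ss @ [s']) ! k = last ss"
    using len by (auto simp: hist_at_def nth_append last_conv_nth)
  with old_steps have steps:
    "(\<Prod>t<Suc m - 1. pol (info (hist_at (os @ [o']) (acts @ [a]) t)) ((acts @ [a]) ! t) *
          P ((ss @ [s']) ! t) ((acts @ [a]) ! t) ((ss @ [s']) ! Suc t))
     = (\<Prod>t<m - 1. pol (info (hist_at os acts t)) (acts ! t) * P (ss ! t) (acts ! t) (ss ! Suc t)) *
       (pol (info (os, acts)) a * P (last ss) a s')"
    using len k by (simp add: nth_append)
  have "mu ((ss @ [s']) ! 0) = mu (ss ! 0)" using len by (simp add: nth_append)
  with \<tau> snoc_in obs steps show ?thesis
    unfolding traj_prob_def traj_snoc_def by (simp add: ac_simps)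
qed

lemma traj_prob_nonneg:
  assumes "is_dist mu" "\<And>s a. is_dist (P s a)" "\<And>s. is_dist (Ob s)" "\<And>i. is_dist (pol i)"
  shows "0 \<le> traj_prob mu P Ob T info pol \<tau>"
  using assms by (cases \<tau>) (auto simp: traj_prob_def is_dist_def intro!: mult_nonneg_nonneg prod_nonneg)

lemma traj_prob_one_indep_policy:
  "traj_prob mu P Ob 1 info pol = traj_prob mu P Ob 1 info pol'"
  by (auto simp: traj_prob_def fun_eq_iff)

lemma sum_traj_prob_one:
  fixes mu :: "'s::finite \<Rightarrow> real" and Ob :: "'s \<Rightarrow> 'o::finite \<Rightarrow> real"
  assumes mu: "is_dist mu" and Ob: "\<And>s. is_dist (Ob s)"
  shows "(\<Sum>\<tau>\<in>(trajs 1 :: ('s list \<times> 'o list \<times> 'a list) set). traj_prob mu P Ob 1 info pol \<tau>) = 1"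
proof -
  have trajs_one: "trajs 1 = (\<lambda>(s, o'). ([s], [o'], [] :: 'a list)) ` UNIV"
    by (auto simp: trajs_def length_Suc_conv)
  have inj: "inj_on (\<lambda>(s::'s, o'::'o). ([s], [o'], [] :: 'a list)) UNIV"
    by (auto simp: inj_on_def)
  have "(\<Sum>\<tau>\<in>(trajs 1 :: ('s list \<times> 'o list \<times> 'a list) set). traj_prob mu P Ob 1 info pol \<tau>)
      = (\<Sum>x\<in>UNIV. mu (fst x) * Ob (fst x) (snd x))"
    unfolding trajs_one by (subst sum.reindex[OF inj]) (simp add: case_prod_beta traj_prob_def trajs_def)
  also have "\<dots> = (\<Sum>s\<in>UNIV. mu s * (\<Sum>o'\<in>UNIV. Ob s o'))"
    by (simp add: UNIV_Times_UNIV[symmetric] sum.cartesian_product case_prod_beta sum_distrib_left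
        del: UNIV_Times_UNIV)
  also have "\<dots> = 1" using mu Ob by (simp add: is_dist_def)
  finally show ?thesis .
qed

subsection \<open>Conditional expectation of a terminal payoff\<close>

fun future_expect ::
  "('s \<Rightarrow> 'a \<Rightarrow> 's \<Rightarrow> real) \<Rightarrow> ('s \<Rightarrow> 'o \<Rightarrow> real) \<Rightarrow> (('o,'a) hist \<Rightarrow> 'i) \<Rightarrow> ('i \<Rightarrow> 'a \<Rightarrow> real) \<Rightarrow>
   ('s list \<times> 'o list \<times> 'a list \<Rightarrow> real) \<Rightarrow> nat \<Rightarrow> 's list \<times> 'o list \<times> 'a list \<Rightarrow> real" where
  "future_expect P Ob info pol f 0 \<tau> = f \<tau>"
| "future_expect P Ob info pol f (Suc n) (ss, os, acts) =
    (\<Sum>a\<in>UNIV. pol (info (os, acts)) a * (\<Sum>s'\<in>UNIV. P (last ss) a s' *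
      (\<Sum>o'\<in>UNIV. Ob s' o' * future_expect P Ob info pol f n (traj_snoc (ss, os, acts) (a, s', o')))))"

lemma sum_traj_prob_future_expect:
  fixes f :: "'s::finite list \<times> 'o::finite list \<times> 'a::finite list \<Rightarrow> real"
  assumes "1 \<le> m"
  shows "(\<Sum>\<tau>\<in>trajs (m + n). traj_prob mu P Ob (m + n) info pol \<tau> * f \<tau>)
       = (\<Sum>\<tau>\<in>trajs m. traj_prob mu P Ob m info pol \<tau> * future_expect P Ob info pol f n \<tau>)"
  using assms
proof (induction n arbitrary: m)
  case 0
  then show ?case by simp
next
  case (Suc n)
  have "(\<Sum>\<tau>\<in>trajs (m + Suc n). traj_prob mu P Ob (m + Suc n) info pol \<tau> * f \<tau>)
      = (\<Sum>\<tau>\<in>trajs (Suc m). traj_prob mu P Ob (Suc m) info pol \<tau> * future_expect P Ob info pol f n \<tau>)"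
    using Suc.IH[of "Suc m"] Suc.prems by simp
  also have "\<dots> = (\<Sum>\<tau>\<in>trajs m. \<Sum>a\<in>UNIV. \<Sum>s'\<in>UNIV. \<Sum>o'\<in>UNIV.
        traj_prob mu P Ob (Suc m) info pol (traj_snoc \<tau> (a, s', o')) *
        future_expect P Ob info pol f n (traj_snoc \<tau> (a, s', o')))"
    by (rule sum_trajs_Suc[OF Suc.prems])
  also have "\<dots> = (\<Sum>\<tau>\<in>trajs m. traj_prob mu P Ob m info pol \<tau> * future_expect P Ob info pol f (Suc n) \<tau>)"
    using Suc.prems
    by (intro sum.cong refl) (auto simp: traj_prob_snoc sum_distrib_left ac_simps)
  finally show ?case .
qed

lemma convex_comb_le:
  fixes w :: "'x::finite \<Rightarrow> real"
  assumes "is_dist w" "\<And>x. g x \<le> c"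
  shows "(\<Sum>x\<in>UNIV. w x * g x) \<le> c"
proof -
  have "(\<Sum>x\<in>UNIV. w x * g x) \<le> (\<Sum>x\<in>UNIV. w x * c)"
    using assms by (intro sum_mono mult_left_mono) (auto simp: is_dist_def)
  also have "\<dots> = c" using assms by (simp add: is_dist_def sum_distrib_right[symmetric])
  finally show ?thesis .
qed

lemma convex_comb_ge:
  fixes w :: "'x::finite \<Rightarrow> real"
  assumes "is_dist w" "\<And>x. c \<le> g x"
  shows "c \<le> (\<Sum>x\<in>UNIV. w x * g x)"
  using convex_comb_le[of w "\<lambda>x. - g x" "- c"] assms by (simp add: sum_negf)

lemma abs_convex_comb_le:
  fixes w :: "'x::finite \<Rightarrow> real"
  assumes "is_dist w" "\<And>x. \<bar>g x\<bar> \<le> c"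
  shows "\<bar>\<Sum>x\<in>UNIV. w x * g x\<bar> \<le> c"
proof -
  have "(\<Sum>x\<in>UNIV. w x * g x) \<le> c" using assms by (intro convex_comb_le) (auto simp: abs_le_iff)
  moreover have "- c \<le> (\<Sum>x\<in>UNIV. w x * g x)"
    by (rule convex_comb_ge[OF assms(1)]) (meson abs_le_D2 minus_le_iff assms(2))
  ultimately show ?thesis by simp
qed

lemma abs_sum_diff_mult_le_tv_dist:
  fixes p q :: "'x::finite \<Rightarrow> real"
  assumes p: "is_dist p" and q: "is_dist q" and g: "\<And>x. 0 \<le> g x \<and> g x \<le> M"
  shows "\<bar>\<Sum>x\<in>UNIV. (p x - q x) * g x\<bar> \<le> tv_dist p q * M"
proof -
  \<comment> \<open>centering \<open>g\<close> at \<open>M/2\<close> costs nothing since \<open>p - q\<close> has total mass zero\<close>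
  have "(\<Sum>x\<in>UNIV. (p x - q x) * (M/2)) = (\<Sum>x\<in>UNIV. p x - q x) * (M/2)"
    by (rule sum_distrib_right[symmetric])
  also have "\<dots> = 0" using p q by (simp add: is_dist_def sum_subtractf)
  finally have "(\<Sum>x\<in>UNIV. (p x - q x) * (M/2)) = 0" .
  then have "(\<Sum>x\<in>UNIV. (p x - q x) * g x) =
      (\<Sum>x\<in>UNIV. (p x - q x) * g x) - (\<Sum>x\<in>UNIV. (p x - q x) * (M/2))"
    by simp
  also have "\<dots> = (\<Sum>x\<in>UNIV. (p x - q x) * (g x - M/2))"
    by (simp add: sum_subtractf[symmetric] algebra_simps)
  also have "\<bar>\<dots>\<bar> \<le> (\<Sum>x\<in>UNIV. \<bar>p x - q x\<bar> * \<bar>g x - M/2\<bar>)"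
    unfolding abs_mult[symmetric] by (rule sum_abs)
  also have "\<dots> \<le> (\<Sum>x\<in>UNIV. \<bar>p x - q x\<bar> * (M/2))"
  proof (intro sum_mono mult_left_mono)
    show "\<bar>g x - M/2\<bar> \<le> M/2" for x unfolding abs_le_iff using g[of x] by linarith
  qed simp
  also have "\<dots> = tv_dist p q * M"
    unfolding tv_dist_def sum_distrib_right[symmetric] by simp
  finally show ?thesis .
qed

subsection \<open>The simulation lemma\<close>

lemma future_expect_bounded:
  fixes f :: "'s::finite list \<times> 'o::finite list \<times> 'a::finite list \<Rightarrow> real"
  assumes P: "\<And>s a. is_dist (P s a)" and Ob: "\<And>s. is_dist (Ob s)" and pol: "\<And>i. is_dist (pol i)"
    and f: "\<And>\<tau>. 0 \<le> f \<tau> \<and> f \<tau> \<le> M"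
  shows "0 \<le> future_expect P Ob info pol f n \<tau> \<and> future_expect P Ob info pol f n \<tau> \<le> M"
proof (induction n arbitrary: \<tau>)
  case 0
  then show ?case using f by simp
next
  case (Suc n)
  obtain ss os acts where "\<tau> = (ss, os, acts)" by (cases \<tau>) auto
  then show ?case
    by simp (intro conjI convex_comb_le convex_comb_ge pol P Ob; simp add: Suc.IH)
qed

lemma future_expect_diff_le:
  fixes f :: "'s::finite list \<times> 'o::finite list \<times> 'a::finite list \<Rightarrow> real"
  assumes P: "\<And>s a. is_dist (P s a)" and Ob: "\<And>s. is_dist (Ob s)"
    and pol1: "\<And>i. is_dist (pol1 i)" and pol2: "\<And>i. is_dist (pol2 i)"
    and tv: "\<And>i. tv_dist (pol1 i) (pol2 i) \<le> \<delta>"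
    and f: "\<And>\<tau>. 0 \<le> f \<tau> \<and> f \<tau> \<le> M"
  shows "\<bar>future_expect P Ob info pol1 f n \<tau> - future_expect P Ob info pol2 f n \<tau>\<bar> \<le> real n * \<delta> * M"
proof (induction n arbitrary: \<tau>)
  case 0
  then show ?case by simp
next
  case (Suc n)
  obtain ss os acts where \<tau>_eq: "\<tau> = (ss, os, acts)" by (cases \<tau>) auto
  define i where "i = info (os, acts)"
  define X where "X pol a = (\<Sum>s'\<in>UNIV. P (last ss) a s' *
      (\<Sum>o'\<in>UNIV. Ob s' o' * future_expect P Ob info pol f n (traj_snoc (ss, os, acts) (a, s', o'))))"
    for pol a
  have step: "future_expect P Ob info pol f (Suc n) \<tau> = (\<Sum>a\<in>UNIV. pol i a * X pol a)" for pol
    unfolding \<tau>_eq X_def i_def by simp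
  have M_nonneg: "0 \<le> M" using f[of undefined] by linarith
  have X_diff: "\<bar>X pol1 a - X pol2 a\<bar> \<le> real n * \<delta> * M" for a
  proof -
    have "X pol1 a - X pol2 a = (\<Sum>s'\<in>UNIV. P (last ss) a s' * (\<Sum>o'\<in>UNIV. Ob s' o' *
        (future_expect P Ob info pol1 f n (traj_snoc (ss, os, acts) (a, s', o')) -
         future_expect P Ob info pol2 f n (traj_snoc (ss, os, acts) (a, s', o')))))"
      unfolding X_def by (simp add: sum_subtractf[symmetric] right_diff_distrib[symmetric])
    also have "\<bar>\<dots>\<bar> \<le> real n * \<delta> * M"
      by (intro abs_convex_comb_le P Ob Suc.IH)
    finally show ?thesis .
  qed
  have X_bounded: "0 \<le> X pol2 a \<and> X pol2 a \<le> M" for a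
    unfolding X_def
    by (intro conjI convex_comb_le convex_comb_ge P Ob; simp add: future_expect_bounded[OF P Ob pol2 f])
  have "future_expect P Ob info pol1 f (Suc n) \<tau> - future_expect P Ob info pol2 f (Suc n) \<tau>
     = (\<Sum>a\<in>UNIV. pol1 i a * (X pol1 a - X pol2 a)) + (\<Sum>a\<in>UNIV. (pol1 i a - pol2 i a) * X pol2 a)"
    unfolding step by (simp add: sum_subtractf[symmetric] sum.distrib[symmetric] algebra_simps)
  moreover have "\<bar>\<Sum>a\<in>UNIV. pol1 i a * (X pol1 a - X pol2 a)\<bar> \<le> real n * \<delta> * M"
    by (intro abs_convex_comb_le pol1 X_diff)
  moreover have "\<bar>\<Sum>a\<in>UNIV. (pol1 i a - pol2 i a) * X pol2 a\<bar> \<le> \<delta> * M"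
    using abs_sum_diff_mult_le_tv_dist[OF pol1 pol2 X_bounded] tv[of i] M_nonneg
    by (meson mult_right_mono order_trans)
  ultimately show ?case by (simp add: algebra_simps abs_triangle_ineq order_trans[OF abs_triangle_ineq])
qed

lemma traj_expect_diff_le:
  fixes mu :: "'s::finite \<Rightarrow> real" and Ob :: "'s \<Rightarrow> 'o::finite \<Rightarrow> real"
    and P :: "'s \<Rightarrow> 'a::finite \<Rightarrow> 's \<Rightarrow> real"
  assumes T_pos: "0 < T" and mu: "is_dist mu"
    and P: "\<And>s a. is_dist (P s a)" and Ob: "\<And>s. is_dist (Ob s)"
    and pol1: "\<And>i. is_dist (pol1 i)" and pol2: "\<And>i. is_dist (pol2 i)"
    and tv: "\<And>i. tv_dist (pol1 i) (pol2 i) \<le> \<delta>"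
    and f: "\<And>\<tau>. 0 \<le> f \<tau> \<and> f \<tau> \<le> M"
  shows "\<bar>(\<Sum>\<tau>\<in>trajs T. traj_prob mu P Ob T info pol1 \<tau> * f \<tau>) -
          (\<Sum>\<tau>\<in>trajs T. traj_prob mu P Ob T info pol2 \<tau> * f \<tau>)\<bar> \<le> real (T - 1) * \<delta> * M"
proof -
  define q where "q = traj_prob mu P Ob 1 info pol1"
  define G where "G pol = future_expect P Ob info pol f (T - 1)" for pol
  have T_eq: "1 + (T - 1) = T" using T_pos by simp
  have expect_eq: "(\<Sum>\<tau>\<in>trajs T. traj_prob mu P Ob T info pol \<tau> * f \<tau>) = (\<Sum>\<tau>\<in>trajs 1. q \<tau> * G pol \<tau>)"
    for pol
    using sum_traj_prob_future_expect[of 1 mu P Ob "T - 1" info pol f]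
    unfolding T_eq q_def G_def traj_prob_one_indep_policy[of _ _ _ _ pol1 pol] by simp
  have "\<bar>(\<Sum>\<tau>\<in>trajs 1. q \<tau> * G pol1 \<tau>) - (\<Sum>\<tau>\<in>trajs 1. q \<tau> * G pol2 \<tau>)\<bar>
      \<le> (\<Sum>\<tau>\<in>trajs 1. \<bar>q \<tau> * (G pol1 \<tau> - G pol2 \<tau>)\<bar>)"
    by (simp add: sum_subtractf[symmetric] right_diff_distrib sum_abs)
  also have "\<dots> \<le> (\<Sum>\<tau>\<in>(trajs 1 :: ('s list \<times> 'o list \<times> 'a list) set). q \<tau> * (real (T - 1) * \<delta> * M))"
  proof (intro sum_mono)
    fix \<tau> :: "'s list \<times> 'o list \<times> 'a list"
    have "0 \<le> q \<tau>" unfolding q_def by (rule traj_prob_nonneg[OF mu P Ob pol1])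
    moreover have "\<bar>G pol1 \<tau> - G pol2 \<tau>\<bar> \<le> real (T - 1) * \<delta> * M"
      unfolding G_def by (rule future_expect_diff_le[OF P Ob pol1 pol2 tv f])
    ultimately show "\<bar>q \<tau> * (G pol1 \<tau> - G pol2 \<tau>)\<bar> \<le> q \<tau> * (real (T - 1) * \<delta> * M)"
      by (simp add: abs_mult mult_left_mono)
  qed
  also have "\<dots> = real (T - 1) * \<delta> * M"
    using sum_traj_prob_one[OF mu Ob, where P=P and info=info and pol=pol1] by (simp add: q_def sum_distrib_right[symmetric])
  finally show ?thesis unfolding expect_eq .
qed

subsection \<open>Part (ii): Lipschitz continuity in the policy\<close>

lemma entropy_emp_dist_nonneg: "0 \<le> entropy (emp_dist xs)"
proof -
  have "(if emp_dist xs y = 0 then 0 else emp_dist xs y * ln (emp_dist xs y)) \<le> 0" for y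
  proof -
    have "0 \<le> emp_dist xs y" "emp_dist xs y \<le> 1"
      by (auto simp: emp_dist_def divide_le_eq_1 length_filter_le)
    then show ?thesis by (auto intro: mult_nonneg_nonpos)
  qed
  then show ?thesis unfolding entropy_def by (simp add: sum_nonpos)
qed

lemma believed_entropy_nonneg:
  assumes "\<And>b s. b \<in> set bs \<Longrightarrow> 0 \<le> b s"
  shows "0 \<le> believed_entropy bs"
  unfolding believed_entropy_def believed_prob_def
  using assms by (intro sum_nonneg mult_nonneg_nonneg prod_nonneg entropy_emp_dist_nonneg) auto

lemma believed_entropy_belief_traj_nonneg:
  assumes "\<And>h. is_dist (bel h)"
  shows "0 \<le> believed_entropy (belief_traj bel T \<tau>)"
proof (rule believed_entropy_nonneg)
  fix b s assume "b \<in> set (belief_traj bel T \<tau>)"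
  then have "b \<in> range bel" by (cases \<tau>) (auto simp: belief_traj_def)
  then obtain h where "b = bel h" by blast
  then show "0 \<le> b s" using assms by (simp add: is_dist_def)
qed

lemma tv_dist_nonneg: "0 \<le> tv_dist p q"
  by (simp add: tv_dist_def sum_nonneg)

lemma tv_dist_le_one:
  assumes "is_dist p" "is_dist q"
  shows "tv_dist p q \<le> 1"
proof -
  have "(\<Sum>x\<in>UNIV. \<bar>p x - q x\<bar>) \<le> (\<Sum>x\<in>UNIV. p x + q x)"
  proof (intro sum_mono)
    fix x
    have "0 \<le> p x" "0 \<le> q x" using assms by (auto simp: is_dist_def)
    then show "\<bar>p x - q x\<bar> \<le> p x + q x" by linarith
  qed
  then show ?thesis using assms by (simp add: tv_dist_def is_dist_def sum.distrib)
qed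

lemma tv_dist_le_policy_tv:
  assumes "\<And>i. is_dist (pol1 i)" "\<And>i. is_dist (pol2 i)"
  shows "tv_dist (pol1 i) (pol2 i) \<le> policy_tv pol1 pol2"
  unfolding policy_tv_def
  using assms tv_dist_le_one by (intro cSUP_upper bdd_aboveI2) auto

lemma policy_tv_nonneg:
  assumes "\<And>i. is_dist (pol1 i)" "\<And>i. is_dist (pol2 i)"
  shows "0 \<le> policy_tv pol1 pol2"
  using order_trans[OF tv_dist_nonneg tv_dist_le_policy_tv[OF assms]] .

lemma sum_mult_restrict_positive:
  fixes p :: "'x \<Rightarrow> real"
  assumes "\<And>x. 0 \<le> p x" "\<And>x. 0 < p x \<Longrightarrow> R x"
  shows "(\<Sum>x\<in>A. p x * h x) = (\<Sum>x\<in>A. p x * (if R x then h x else 0))"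
proof (intro sum.cong refl)
  fix x
  show "p x * h x = p x * (if R x then h x else 0)"
    using assms(1)[of x] assms(2)[of x] by (cases "R x") (auto simp: le_less)
qed

lemma MBE_obj_eq_sum_believed_entropy:
  "MBE_obj mu P Ob T info bel pol =
    (\<Sum>\<tau>\<in>trajs T. traj_prob mu P Ob T info pol \<tau> * believed_entropy (belief_traj bel T \<tau>))"
proof -
  have "length (belief_traj bel T \<tau>) = T" for \<tau> by (cases \<tau>) (simp add: belief_traj_def)
  then show ?thesis unfolding MBE_obj_def believed_entropy_def by simp
qed

lemma belief_traj_in_pos_belief_trajs:
  fixes mu :: "'s::finite \<Rightarrow> real" and Ob :: "'s \<Rightarrow> 'o::finite \<Rightarrow> real"
    and P :: "'s \<Rightarrow> 'a::finite \<Rightarrow> 's \<Rightarrow> real"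
  assumes mu: "is_dist mu" and P: "\<And>s a. is_dist (P s a)" and Ob: "\<And>s. is_dist (Ob s)"
    and pol1: "\<And>i. is_dist (pol1 i)" and pol2: "\<And>i. is_dist (pol2 i)"
    and pos: "0 < traj_prob mu P Ob T info pol1 \<tau> \<or> 0 < traj_prob mu P Ob T info pol2 \<tau>"
  shows "belief_traj bel T \<tau> \<in> pos_belief_trajs mu P Ob T info bel pol1 pol2"
proof -
  have \<tau>: "\<tau> \<in> trajs T"
    using pos by (cases \<tau>) (auto simp: traj_prob_def split: if_splits)
  have fin: "finite {\<tau>'\<in>trajs T. belief_traj bel T \<tau>' = belief_traj bel T \<tau>}"
    using finite_trajs by (rule finite_subset[rotated]) auto
  have le: "traj_prob mu P Ob T info pol \<tau> \<le> belief_traj_prob mu P Ob T info bel pol (belief_traj bel T \<tau>)"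
    if "\<And>i. is_dist (pol i)" for pol
    unfolding belief_traj_prob_def
    using \<tau> traj_prob_nonneg[OF mu P Ob that] by (intro member_le_sum[OF _ _ fin]) auto
  show ?thesis using pos le[of pol1, OF pol1] le[of pol2, OF pol2] unfolding pos_belief_trajs_def by auto
qed

lemma pos_belief_traj_is_belief_traj:
  assumes "B \<in> pos_belief_trajs mu P Ob T info bel pol1 pol2"
  obtains \<tau> where "belief_traj bel T \<tau> = B"
proof -
  have "{\<tau>\<in>trajs T. belief_traj bel T \<tau> = B} \<noteq> {}"
  proof
    assume none: "{\<tau>\<in>trajs T. belief_traj bel T \<tau> = B} = {}"
    have "belief_traj_prob mu P Ob T info bel pol B = 0" for pol
      unfolding belief_traj_prob_def by (subst none) simp
    then show False using assms unfolding pos_belief_trajs_def by simp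
  qed
  then show ?thesis using that by blast
qed

lemma MBE_obj_lipschitz:
  fixes mu :: "'s::finite \<Rightarrow> real" and Ob :: "'s \<Rightarrow> 'o::finite \<Rightarrow> real"
    and P :: "'s \<Rightarrow> 'a::finite \<Rightarrow> 's \<Rightarrow> real"
  assumes T_pos: "0 < T" and mu: "is_dist mu"
    and P: "\<And>s a. is_dist (P s a)" and Ob: "\<And>s. is_dist (Ob s)" and bel: "\<And>h. is_dist (bel h)"
    and pol1: "\<And>i. is_dist (pol1 i)" and pol2: "\<And>i. is_dist (pol2 i)"
    and Bstar: "Bstar \<in> pos_belief_trajs mu P Ob T info bel pol1 pol2"
    and Bstar_max: "\<And>B. B \<in> pos_belief_trajs mu P Ob T info bel pol1 pol2 \<Longrightarrow>
          believed_entropy B \<le> believed_entropy Bstar"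
  shows "\<bar>MBE_obj mu P Ob T info bel pol1 - MBE_obj mu P Ob T info bel pol2\<bar>
         \<le> real T * believed_entropy Bstar * policy_tv pol1 pol2"
proof -
  define M where "M = believed_entropy Bstar"
  define \<delta> where "\<delta> = policy_tv pol1 pol2"
  define HB where "HB \<tau> = believed_entropy (belief_traj bel T \<tau>)" for \<tau>
  define reachable where "reachable \<tau> \<longleftrightarrow>
    0 < traj_prob mu P Ob T info pol1 \<tau> \<or> 0 < traj_prob mu P Ob T info pol2 \<tau>" for \<tau>
  \<comment> \<open>the bound \<open>M\<close> only holds on reachable trajectories, so the payoff is truncated elsewhere\<close>
  define f where "f \<tau> = (if reachable \<tau> then HB \<tau> else 0)" for \<tau>
  have M_nonneg: "0 \<le> M"
  proof -
    obtain \<tau> where "belief_traj bel T \<tau> = Bstar"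
      using Bstar by (rule pos_belief_traj_is_belief_traj)
    then show ?thesis using believed_entropy_belief_traj_nonneg[of bel T \<tau>, OF bel] by (simp add: M_def)
  qed
  have f_bounded: "0 \<le> f \<tau> \<and> f \<tau> \<le> M" for \<tau>
  proof (cases "reachable \<tau>")
    case True
    then have "HB \<tau> \<le> M"
      unfolding HB_def M_def reachable_def
      by (intro Bstar_max belief_traj_in_pos_belief_trajs[OF mu P Ob pol1 pol2])
    then show ?thesis
      using True believed_entropy_belief_traj_nonneg[OF bel] by (simp add: f_def HB_def)
  qed (simp add: f_def M_nonneg)
  have "MBE_obj mu P Ob T info bel pol1 = (\<Sum>\<tau>\<in>trajs T. traj_prob mu P Ob T info pol1 \<tau> * f \<tau>)"
    unfolding MBE_obj_eq_sum_believed_entropy f_def HB_def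
    by (rule sum_mult_restrict_positive[OF traj_prob_nonneg[where pol=pol1, OF mu P Ob pol1]])
      (simp add: reachable_def)
  moreover have "MBE_obj mu P Ob T info bel pol2 = (\<Sum>\<tau>\<in>trajs T. traj_prob mu P Ob T info pol2 \<tau> * f \<tau>)"
    unfolding MBE_obj_eq_sum_believed_entropy f_def HB_def
    by (rule sum_mult_restrict_positive[OF traj_prob_nonneg[where pol=pol2, OF mu P Ob pol2]])
      (simp add: reachable_def)
  ultimately have "\<bar>MBE_obj mu P Ob T info bel pol1 - MBE_obj mu P Ob T info bel pol2\<bar>
      \<le> real (T - 1) * \<delta> * M"
    unfolding \<delta>_def
    using traj_expect_diff_le[OF T_pos mu P Ob pol1 pol2 tv_dist_le_policy_tv[OF pol1 pol2] f_bounded]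
    by simp
  also have "\<dots> \<le> real T * M * \<delta>"
  proof -
    have "real (T - 1) * (\<delta> * M) \<le> real T * (\<delta> * M)"
      using M_nonneg policy_tv_nonneg[of pol1 pol2, OF pol1 pol2] unfolding \<delta>_def by (intro mult_right_mono) auto
    then show ?thesis by (simp add: ac_simps)
  qed
  finally show ?thesis unfolding M_def \<delta>_def .
qed

subsection \<open>Part (i): the policy gradient\<close>

lemma has_derivative_prod_log:
  fixes f :: "'i \<Rightarrow> 'p::real_normed_vector \<Rightarrow> 'b::real_normed_field"
  assumes K: "finite K" and der: "\<And>t. t \<in> K \<Longrightarrow> (f t has_derivative f' t) (at x)"
    and nonzero: "\<And>t. t \<in> K \<Longrightarrow> f t x \<noteq> 0"
  shows "((\<lambda>y. \<Prod>t\<in>K. f t y) has_derivative (\<lambda>h. (\<Prod>t\<in>K. f t x) * (\<Sum>t\<in>K. f' t h / f t x))) (at x)"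
proof (rule has_derivative_eq_rhs[OF has_derivative_prod[OF der]])
  have "f' t h * (\<Prod>j\<in>K - {t}. f j x) = (\<Prod>t\<in>K. f t x) * (f' t h / f t x)" if "t \<in> K" for t h
    using prod.remove[OF K that, of "\<lambda>j. f j x"] nonzero[OF that] by (simp add: field_simps)
  then show "(\<lambda>h. \<Sum>t\<in>K. f' t h * (\<Prod>j\<in>K - {t}. f j x)) = (\<lambda>h. (\<Prod>t\<in>K. f t x) * (\<Sum>t\<in>K. f' t h / f t x))"
    by (simp add: sum_distrib_left)
qed

lemma traj_prob_has_derivative:
  fixes pol :: "'p::real_normed_vector \<Rightarrow> 'i \<Rightarrow> 'a \<Rightarrow> real"
  assumes pos: "\<And>i a. pol \<theta> i a > 0"
    and der: "\<And>i a. ((\<lambda>\<theta>'. pol \<theta>' i a) has_derivative D \<theta> i a) (at \<theta>)"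
  shows "((\<lambda>\<theta>'. traj_prob mu P Ob T info (pol \<theta>') \<tau>) has_derivative
          (\<lambda>h. traj_prob mu P Ob T info (pol \<theta>) \<tau> * score T info (pol \<theta>) (D \<theta>) \<tau> h)) (at \<theta>)"
proof (cases "\<tau> \<in> trajs T")
  case False
  then show ?thesis by (simp add: traj_prob_def split: prod.splits)
next
  case True
  obtain ss os acts where \<tau>_eq: "\<tau> = (ss, os, acts)" by (cases \<tau>) auto
  define I where "I t = info (hist_at os acts t)" for t
  define C where "C = mu (ss ! 0) * (\<Prod>t<T. Ob (ss ! t) (os ! t)) *
    (\<Prod>t<T - 1. P (ss ! t) (acts ! t) (ss ! Suc t))"
  have factor: "traj_prob mu P Ob T info pl \<tau> = C * (\<Prod>t<T - 1. pl (I t) (acts ! t))" for pl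
    using True unfolding \<tau>_eq traj_prob_def C_def I_def by (simp add: prod.distrib ac_simps)
  have score: "score T info (pol \<theta>) (D \<theta>) \<tau> h = (\<Sum>t<T - 1. D \<theta> (I t) (acts ! t) h / pol \<theta> (I t) (acts ! t))"
    for h
    unfolding \<tau>_eq score_def I_def by simp
  show ?thesis
    unfolding factor score mult.assoc
    using pos[THEN less_imp_neq] by (intro has_derivative_mult_right has_derivative_prod_log der) auto
qed

lemma MBE_obj_has_derivative:
  fixes pol :: "'p::real_normed_vector \<Rightarrow> 'i \<Rightarrow> 'a::finite \<Rightarrow> real"
    and mu :: "'s::finite \<Rightarrow> real" and Ob :: "'s \<Rightarrow> 'o::finite \<Rightarrow> real"
  assumes pos: "\<And>i a. pol \<theta> i a > 0"
    and der: "\<And>i a. ((\<lambda>\<theta>'. pol \<theta>' i a) has_derivative D \<theta> i a) (at \<theta>)"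
  shows "((\<lambda>\<theta>'. MBE_obj mu P Ob T info bel (pol \<theta>')) has_derivative
            (\<lambda>h. \<Sum>\<tau>\<in>trajs T. traj_prob mu P Ob T info (pol \<theta>) \<tau> *
                   (\<Sum>xs\<in>{xs. length xs = T}.
                      believed_prob (belief_traj bel T \<tau>) xs *
                      (score T info (pol \<theta>) (D \<theta>) \<tau> h * entropy (emp_dist xs)))))
          (at \<theta>)"
proof -
  define HB where "HB \<tau> = (\<Sum>xs\<in>{xs. length xs = T}.
    believed_prob (belief_traj bel T \<tau>) xs * entropy (emp_dist xs))" for \<tau>
  have "((\<lambda>\<theta>'. \<Sum>\<tau>\<in>trajs T. traj_prob mu P Ob T info (pol \<theta>') \<tau> * HB \<tau>) has_derivative
     (\<lambda>h. \<Sum>\<tau>\<in>trajs T. traj_prob mu P Ob T info (pol \<theta>) \<tau> * score T info (pol \<theta>) (D \<theta>) \<tau> h * HB \<tau>))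
     (at \<theta>)"
    by (intro has_derivative_sum has_derivative_mult_left traj_prob_has_derivative pos der)
  then show ?thesis unfolding MBE_obj_def HB_def[symmetric]
    by (rule has_derivative_eq_rhs) (simp add: HB_def sum_distrib_left ac_simps)
qed

theorem theorem3:
  fixes mu :: "'s::finite \<Rightarrow> real"
    and P :: "'s \<Rightarrow> 'a::finite \<Rightarrow> 's \<Rightarrow> real"
    and Ob :: "'s \<Rightarrow> 'o::finite \<Rightarrow> real"
    and T :: nat
    and info :: "('o,'a) hist \<Rightarrow> 'i"
    and bel :: "('o,'a) hist \<Rightarrow> 's \<Rightarrow> real"
  assumes T_pos: "0 < T"
    and mu_dist: "is_dist mu"
    and P_dist: "\<And>s a. is_dist (P s a)"
    and Ob_dist: "\<And>s. is_dist (Ob s)"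
    and bel_dist: "\<And>h. is_dist (bel h)"
  shows
   "(\<forall>(pol :: 'p::euclidean_space \<Rightarrow> 'i \<Rightarrow> 'a \<Rightarrow> real) (D :: 'p \<Rightarrow> 'i \<Rightarrow> 'a \<Rightarrow> 'p \<Rightarrow> real) \<Theta>.
       open \<Theta> \<and>
       (\<forall>\<theta>\<in>\<Theta>. \<forall>i. is_dist (pol \<theta> i)) \<and>
       (\<forall>\<theta>\<in>\<Theta>. \<forall>i a. pol \<theta> i a > 0) \<and>
       (\<forall>\<theta>\<in>\<Theta>. \<forall>i a. ((\<lambda>\<theta>'. pol \<theta>' i a) has_derivative D \<theta> i a) (at \<theta>))
       \<longrightarrow>
       (\<forall>\<theta>\<in>\<Theta>.
          ((\<lambda>\<theta>'. MBE_obj mu P Ob T info bel (pol \<theta>')) has_derivative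
            (\<lambda>h. \<Sum>\<tau>\<in>trajs T. traj_prob mu P Ob T info (pol \<theta>) \<tau> *
                   (\<Sum>xs\<in>{xs. length xs = T}.
                      believed_prob (belief_traj bel T \<tau>) xs *
                      (score T info (pol \<theta>) (D \<theta>) \<tau> h * entropy (emp_dist xs)))))
          (at \<theta>)))
    \<and>
    (\<forall>(pol1 :: 'i \<Rightarrow> 'a \<Rightarrow> real) pol2 Bstar.
       (\<forall>i. is_dist (pol1 i)) \<and> (\<forall>i. is_dist (pol2 i)) \<and>
       Bstar \<in> pos_belief_trajs mu P Ob T info bel pol1 pol2 \<and>
       (\<forall>B\<in>pos_belief_trajs mu P Ob T info bel pol1 pol2.
          believed_entropy B \<le> believed_entropy Bstar)
       \<longrightarrow>
       \<bar>MBE_obj mu P Ob T info bel pol1 - MBE_obj mu P Ob T info bel pol2\<bar>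
         \<le> real T * believed_entropy Bstar * policy_tv pol1 pol2)"
  by (intro conjI allI impI ballI; elim conjE)
    (auto intro!: MBE_obj_has_derivative
      MBE_obj_lipschitz[where P=P and Ob=Ob and bel=bel, OF T_pos mu_dist P_dist Ob_dist bel_dist])

end
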